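(* For $0<r<1$ and $c>0$, the topological space $\mathbb{Z}((T))_{r,\le c}$ is compact.
   Context: $\mathbb{Z}((T))_{r,\le c}$ is the set of integer Laurent series $\sum_{n\gg-\infty}a_nT^n$ ($a_n\in\mathbb{Z}$, $a_n=0$ for $n$ sufficiently negative) with $\sum|a_n|r^n\le c$, with the $T$-adic topology given by the norm $\|f\|=\delta^{v_T(f)}$ for fixed $\delta\in(0,1)$, $v_T(f)$ being the smallest index of a nonzero coefficient. *)

theory Defs
  imports "HOL-Analysis.Analysis" "HOL-Computational_Algebra.Formal_Laurent_Series"
begin

definition tadic_norm :: "real \<Rightarrow> int fls \<Rightarrow> real" where
  "tadic_norm \<delta> f = (if f = 0 then 0 else \<delta> powi (fls_subdegree f))"

definition tadic_dist :: "real \<Rightarrow> int fls \<Rightarrow> int fls \<Rightarrow> real" where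
  "tadic_dist \<delta> f g = tadic_norm \<delta> (f - g)"

definition tadic_topology :: "real \<Rightarrow> int fls topology" where
  "tadic_topology \<delta> = Metric_space.mtopology UNIV (tadic_dist \<delta>)"

definition Zr_le :: "real \<Rightarrow> real \<Rightarrow> int fls set" where
  "Zr_le r c = {f. (\<lambda>n::int. real_of_int \<bar>fls_nth f n\<bar> * r powi n) summable_on UNIV \<and>
                   (\<Sum>\<^sub>\<infinity>n::int. real_of_int \<bar>fls_nth f n\<bar> * r powi n) \<le> c}"

end

theory Submission
  imports Defs
begin

text \<open>The T-adic metric is an ultrametric in which \<open>d(f, g) < \<delta>^k\<close> says exactly that
  \<open>f\<close> and \<open>g\<close> have the same coefficients up to index \<open>k\<close>. Hence \<open>\<int>((T))\<close> is complete,
  and a set of Laurent series is totally bounded as soon as its members vanish below a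
  common index and each coefficient takes only finitely many values on it. Both hold for
  \<open>\<int>((T))_{r,\<le>c}\<close>: \<open>|a_n| r^n \<le> c\<close> bounds every \<open>|a_n|\<close>, and forces \<open>a_n = 0\<close> once
  \<open>r^n > c\<close> because a nonzero integer has absolute value at least 1. Finally
  \<open>\<int>((T))_{r,\<le>c}\<close> is closed, since the condition \<open>\<Sum>|a_n| r^n \<le> c\<close> amounts to all finite
  partial sums being at most \<open>c\<close>, and each of these involves finitely many coefficients.\<close>

lemma tadic_dist_less_power_int_iff:
  fixes \<delta> :: real and k :: int
  assumes "0 < \<delta>" "\<delta> < 1"
  shows "tadic_dist \<delta> f g < \<delta> powi k \<longleftrightarrow> (\<forall>n\<le>k. fls_nth f n = fls_nth g n)"
proof (cases "f = g")
  case True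
  then show ?thesis using assms by (simp add: tadic_dist_def tadic_norm_def)
next
  case False
  define v where "v = fls_subdegree (f - g)"
  have "tadic_dist \<delta> f g = \<delta> powi v"
    using False by (simp add: tadic_dist_def tadic_norm_def v_def)
  moreover have "\<delta> powi v < \<delta> powi k \<longleftrightarrow> k < v"
    using assms power_int_strict_decreasing[of k v \<delta>] power_int_decreasing[of v k \<delta>]
    by (metis linorder_not_le not_less order_less_le)
  moreover have "k < v \<longleftrightarrow> (\<forall>n\<le>k. fls_nth f n = fls_nth g n)"
  proof
    assume "k < v"
    then show "\<forall>n\<le>k. fls_nth f n = fls_nth g n"
      using fls_eq0_below_subdegree[of _ "f - g"] by (auto simp: v_def)
  next
    assume "\<forall>n\<le>k. fls_nth f n = fls_nth g n"
    moreover have "fls_nth (f - g) v \<noteq> 0"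
      unfolding v_def by (rule nth_fls_subdegree_nonzero) (use False in simp)
    ultimately show "k < v" by (metis fls_minus_nth not_le eq_iff_diff_eq_0)
  qed
  ultimately show ?thesis by simp
qed

lemma Metric_space_tadic_dist:
  fixes \<delta> :: real
  assumes "0 < \<delta>" "\<delta> < 1"
  shows "Metric_space UNIV (tadic_dist \<delta>)"
proof
  fix x y :: "int fls"
  show "0 \<le> tadic_dist \<delta> x y" using assms by (simp add: tadic_dist_def tadic_norm_def)
  show "tadic_dist \<delta> x y = tadic_dist \<delta> y x"
    by (simp add: tadic_dist_def tadic_norm_def fls_subdegree_minus_sym)
  show "tadic_dist \<delta> x y = 0 \<longleftrightarrow> x = y"
    using assms by (simp add: tadic_dist_def tadic_norm_def)
next
  fix f g h :: "int fls"
  show "tadic_dist \<delta> f h \<le> tadic_dist \<delta> f g + tadic_dist \<delta> g h"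
  proof (cases "f = g \<or> g = h \<or> f = h")
    case True
    then show ?thesis using assms
      by (auto simp: tadic_dist_def tadic_norm_def fls_subdegree_minus_sym)
  next
    case False
    define v1 where "v1 = fls_subdegree (f - g)"
    define v2 where "v2 = fls_subdegree (g - h)"
    define w where "w = fls_subdegree (f - h)"
    have "min v1 v2 \<le> w" unfolding w_def
    proof (rule fls_subdegree_geI)
      show "f - h \<noteq> 0" using False by simp
      fix k assume "k < min v1 v2"
      then have "fls_nth (f - g) k = 0" "fls_nth (g - h) k = 0"
        using fls_eq0_below_subdegree[of k "f - g"] fls_eq0_below_subdegree[of k "g - h"]
        unfolding v1_def v2_def by (metis min_less_iff_conj)+
      then show "fls_nth (f - h) k = 0" by simp
    qed
    then have "\<delta> powi w \<le> \<delta> powi (min v1 v2)"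
      using assms by (intro power_int_decreasing) auto
    also have "\<dots> \<le> \<delta> powi v1 + \<delta> powi v2"
      using assms by (cases "v1 \<le> v2") (auto simp: min_def)
    finally show ?thesis using False
      by (simp add: tadic_dist_def tadic_norm_def v1_def v2_def w_def)
  qed
qed

lemma ex_power_int_less:
  fixes \<delta> e :: real
  assumes "0 < \<delta>" "\<delta> < 1" "0 < e"
  obtains k :: int where "\<delta> powi k < e"
proof -
  obtain k :: nat where "\<delta> ^ k < e" using real_arch_pow_inv[OF assms(3,2)] by blast
  then show ?thesis using that[of "int k"] by simp
qed

lemma tadic_MCauchy_iff:
  assumes "0 < \<delta>" "\<delta> < 1"
  shows "Metric_space.MCauchy UNIV (tadic_dist \<delta>) \<sigma> \<longleftrightarrow>
    (\<forall>k. \<exists>N. \<forall>m m'. N \<le> m \<longrightarrow> N \<le> m' \<longrightarrow> (\<forall>n\<le>k. fls_nth (\<sigma> m) n = fls_nth (\<sigma> m') n))"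
    (is "_ \<longleftrightarrow> ?coeffs")
proof -
  interpret Metric_space UNIV "tadic_dist \<delta>" using Metric_space_tadic_dist[OF assms] .
  have "(\<forall>e>0. \<exists>N. \<forall>m m'. N \<le> m \<longrightarrow> N \<le> m' \<longrightarrow> tadic_dist \<delta> (\<sigma> m) (\<sigma> m') < e) \<longleftrightarrow> ?coeffs"
  proof
    assume "\<forall>e>0. \<exists>N. \<forall>m m'. N \<le> m \<longrightarrow> N \<le> m' \<longrightarrow> tadic_dist \<delta> (\<sigma> m) (\<sigma> m') < e"
    then show ?coeffs
      using assms tadic_dist_less_power_int_iff by (metis zero_less_power_int)
  next
    assume coeffs: ?coeffs
    show "\<forall>e>0. \<exists>N. \<forall>m m'. N \<le> m \<longrightarrow> N \<le> m' \<longrightarrow> tadic_dist \<delta> (\<sigma> m) (\<sigma> m') < e"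
    proof (intro allI impI)
      fix e :: real assume "0 < e"
      then obtain k where "\<delta> powi k < e" using ex_power_int_less assms by blast
      then show "\<exists>N. \<forall>m m'. N \<le> m \<longrightarrow> N \<le> m' \<longrightarrow> tadic_dist \<delta> (\<sigma> m) (\<sigma> m') < e"
        using coeffs tadic_dist_less_power_int_iff[OF assms] by (meson order_less_trans)
    qed
  qed
  then show ?thesis by (simp add: MCauchy_def)
qed

lemma tadic_limitin_iff:
  assumes "0 < \<delta>" "\<delta> < 1"
  shows "limitin (tadic_topology \<delta>) \<sigma> l sequentially \<longleftrightarrow>
    (\<forall>k. \<exists>N. \<forall>m\<ge>N. \<forall>n\<le>k. fls_nth (\<sigma> m) n = fls_nth l n)"
    (is "_ \<longleftrightarrow> ?coeffs")
proof -
  interpret Metric_space UNIV "tadic_dist \<delta>" using Metric_space_tadic_dist[OF assms] .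
  have "(\<forall>e>0. \<exists>N. \<forall>m\<ge>N. tadic_dist \<delta> (\<sigma> m) l < e) \<longleftrightarrow> ?coeffs"
  proof
    assume "\<forall>e>0. \<exists>N. \<forall>m\<ge>N. tadic_dist \<delta> (\<sigma> m) l < e"
    then show ?coeffs
      using assms tadic_dist_less_power_int_iff by (metis zero_less_power_int)
  next
    assume coeffs: ?coeffs
    show "\<forall>e>0. \<exists>N. \<forall>m\<ge>N. tadic_dist \<delta> (\<sigma> m) l < e"
    proof (intro allI impI)
      fix e :: real assume "0 < e"
      then obtain k where "\<delta> powi k < e" using ex_power_int_less assms by blast
      then show "\<exists>N. \<forall>m\<ge>N. tadic_dist \<delta> (\<sigma> m) l < e"
        using coeffs tadic_dist_less_power_int_iff[OF assms] by (meson order_less_trans)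
    qed
  qed
  then show ?thesis by (simp add: tadic_topology_def limit_metric_sequentially)
qed

lemma mcomplete_tadic:
  assumes "0 < \<delta>" "\<delta> < 1"
  shows "Metric_space.mcomplete UNIV (tadic_dist \<delta>)"
  unfolding Metric_space.mcomplete_def[OF Metric_space_tadic_dist[OF assms]]
proof (intro allI impI)
  fix \<sigma> assume "Metric_space.MCauchy UNIV (tadic_dist \<delta>) \<sigma>"
  then obtain N where N: "\<And>k m m' n. N k \<le> m \<Longrightarrow> N k \<le> m' \<Longrightarrow> n \<le> k \<Longrightarrow>
      fls_nth (\<sigma> m) n = fls_nth (\<sigma> m') n"
    using tadic_MCauchy_iff[OF assms] by metis
  define g where "g n = fls_nth (\<sigma> (N n)) n" for n
  have agree: "fls_nth (\<sigma> m) n = g n" if "N k \<le> m" "n \<le> k" for k m n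
    using N[of k m "max m (N n)" n] N[of n "max m (N n)" "N n" n] that by (simp add: g_def)
  have "g n = 0" if "n < min 0 (fls_subdegree (\<sigma> (N 0)))" for n
    using agree[of 0 "N 0" n] that by simp
  then have "fls_nth (Abs_fls g) = g"
    by (intro ext nth_Abs_fls_lower_bound) blast
  then have "limitin (tadic_topology \<delta>) \<sigma> (Abs_fls g) sequentially"
    using agree tadic_limitin_iff[OF assms] by metis
  then show "\<exists>l. limitin (Metric_space.mtopology UNIV (tadic_dist \<delta>)) \<sigma> l sequentially"
    unfolding tadic_topology_def by blast
qed

lemma Zr_le_iff_finite_sums:
  assumes "0 < r"
  shows "f \<in> Zr_le r c \<longleftrightarrow>
    (\<forall>F. finite F \<longrightarrow> (\<Sum>n\<in>F. real_of_int \<bar>fls_nth f n\<bar> * r powi n) \<le> c)"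
proof -
  let ?a = "\<lambda>n::int. real_of_int \<bar>fls_nth f n\<bar> * r powi n"
  have nonneg: "0 \<le> ?a n" for n using assms by simp
  show ?thesis
  proof
    assume "f \<in> Zr_le r c"
    then have summable: "?a summable_on UNIV" and le: "(\<Sum>\<^sub>\<infinity>n. ?a n) \<le> c"
      by (auto simp: Zr_le_def)
    show "\<forall>F. finite F \<longrightarrow> sum ?a F \<le> c"
    proof (intro allI impI)
      fix F :: "int set" assume "finite F"
      then have "sum ?a F = (\<Sum>\<^sub>\<infinity>n\<in>F. ?a n)" by simp
      also have "\<dots> \<le> (\<Sum>\<^sub>\<infinity>n. ?a n)"
        using \<open>finite F\<close> summable nonneg by (intro infsum_mono_neutral) auto
      finally show "sum ?a F \<le> c" using le by simp
    qed
  next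
    assume sums: "\<forall>F. finite F \<longrightarrow> sum ?a F \<le> c"
    then have summable: "?a summable_on UNIV"
      using nonneg by (intro nonneg_bdd_above_summable_on) (auto simp: bdd_above_def)
    then have "(\<Sum>\<^sub>\<infinity>n. ?a n) \<le> c" using sums by (intro infsum_le_finite_sums) auto
    then show "f \<in> Zr_le r c" using summable by (simp add: Zr_le_def)
  qed
qed

lemma Zr_le_abs_nth_le:
  assumes "f \<in> Zr_le r c" "0 < r"
  shows "real_of_int \<bar>fls_nth f n\<bar> * r powi n \<le> c"
  using assms Zr_le_iff_finite_sums[of r f c] finite.emptyI finite_insert[of n "{}"] by auto

lemma closedin_Zr_le:
  assumes "0 < \<delta>" "\<delta> < 1" "0 < r"
  shows "closedin (tadic_topology \<delta>) (Zr_le r c)"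
proof -
  interpret Metric_space UNIV "tadic_dist \<delta>" using Metric_space_tadic_dist assms(1,2) .
  have "l \<in> Zr_le r c"
    if range: "range \<sigma> \<subseteq> Zr_le r c" and lim: "limitin (tadic_topology \<delta>) \<sigma> l sequentially"
    for \<sigma> l
  proof -
    have "(\<Sum>n\<in>F. real_of_int \<bar>fls_nth l n\<bar> * r powi n) \<le> c" if "finite F" for F
    proof -
      obtain m where "\<forall>n\<le>Max F. fls_nth (\<sigma> m) n = fls_nth l n"
        using lim tadic_limitin_iff[OF assms(1,2)] by blast
      then have "(\<Sum>n\<in>F. real_of_int \<bar>fls_nth l n\<bar> * r powi n) =
          (\<Sum>n\<in>F. real_of_int \<bar>fls_nth (\<sigma> m) n\<bar> * r powi n)"
        using \<open>finite F\<close> by (intro sum.cong) auto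
      also have "\<dots> \<le> c"
        using range \<open>finite F\<close> Zr_le_iff_finite_sums[OF assms(3)] by blast
      finally show ?thesis .
    qed
    then show ?thesis using Zr_le_iff_finite_sums[OF assms(3)] by blast
  qed
  then show ?thesis
    unfolding metric_closedin_iff_sequentially_closed tadic_topology_def by auto
qed

lemma Zr_le_nth_eq_0_below:
  assumes "0 < r" "r < 1"
  obtains N0 :: int where "\<And>f n. f \<in> Zr_le r c \<Longrightarrow> n < N0 \<Longrightarrow> fls_nth f n = 0"
proof -
  obtain m :: nat where m: "c < (1/r) ^ m" using real_arch_pow[of "1/r" c] assms by auto
  have "fls_nth f n = 0" if f: "f \<in> Zr_le r c" and n: "n < - int m + 1" for f n
  proof (rule ccontr)
    assume "fls_nth f n \<noteq> 0"
    then have "1 \<le> real_of_int \<bar>fls_nth f n\<bar>" by linarith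
    have "(1/r) ^ m = r powi (- int m)"
      by (simp add: power_int_minus power_divide inverse_eq_divide)
    also have "\<dots> \<le> r powi n" using n assms by (intro power_int_decreasing) auto
    also have "\<dots> \<le> real_of_int \<bar>fls_nth f n\<bar> * r powi n"
      using \<open>1 \<le> real_of_int \<bar>fls_nth f n\<bar>\<close> zero_less_power_int[OF assms(1), of n]
      by (simp add: mult_le_cancel_right1)
    also have "\<dots> \<le> c" using Zr_le_abs_nth_le[OF f assms(1)] .
    finally show False using m by simp
  qed
  then show ?thesis using that by blast
qed

lemma finite_Zr_le_nth_image:
  assumes "0 < r"
  shows "finite ((\<lambda>f. fls_nth f n) ` Zr_le r c)"
proof (rule finite_subset)
  let ?B = "\<lceil>c / r powi n\<rceil>"
  show "(\<lambda>f. fls_nth f n) ` Zr_le r c \<subseteq> {-?B..?B}"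
  proof clarify
    fix f assume "f \<in> Zr_le r c"
    then have "real_of_int \<bar>fls_nth f n\<bar> \<le> c / r powi n"
      using Zr_le_abs_nth_le assms by (simp add: field_simps)
    then have "\<bar>fls_nth f n\<bar> \<le> ?B" by linarith
    then show "fls_nth f n \<in> {-?B..?B}" by auto
  qed
qed simp

lemma tadic_mtotally_bounded:
  assumes "0 < \<delta>" "\<delta> < 1"
    and below: "\<And>f n. f \<in> S \<Longrightarrow> n < N0 \<Longrightarrow> fls_nth f n = 0"
    and finite_nth: "\<And>n. finite ((\<lambda>f. fls_nth f n) ` S)"
  shows "Metric_space.mtotally_bounded UNIV (tadic_dist \<delta>) S"
proof -
  interpret Metric_space UNIV "tadic_dist \<delta>" using Metric_space_tadic_dist[OF assms(1,2)] .
  show ?thesis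
    unfolding mtotally_bounded_def
  proof (intro allI impI)
    fix e :: real assume "0 < e"
    then obtain k where k: "\<delta> powi k < e" using ex_power_int_less assms(1,2) by blast
    define trunc where "trunc (f :: int fls) = restrict (fls_nth f) {N0..k}" for f
    define K where "K = inv_into S trunc ` trunc ` S"
    have "trunc ` S \<subseteq> PiE {N0..k} (\<lambda>n. (\<lambda>f. fls_nth f n) ` S)"
      by (auto simp: trunc_def)
    then have "finite K"
      unfolding K_def using finite_nth by (intro finite_imageI finite_subset[OF _ finite_PiE]) auto
    moreover have "K \<subseteq> S" unfolding K_def by (auto intro: inv_into_into)
    moreover have "S \<subseteq> (\<Union>g\<in>K. mball g e)"
    proof
      fix f assume "f \<in> S"
      define g where "g = inv_into S trunc (trunc f)"
      have "g \<in> S" "trunc g = trunc f"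
        using \<open>f \<in> S\<close> by (simp_all add: g_def inv_into_into f_inv_into_f)
      then have "fls_nth g n = fls_nth f n" if "n \<le> k" for n
        using below[of g n] below[of f n] \<open>f \<in> S\<close> that
        by (cases "n < N0") (auto simp: trunc_def dest: fun_cong[of _ _ n])
      then have "tadic_dist \<delta> g f < e"
        using k tadic_dist_less_power_int_iff[OF assms(1,2)] by (meson order_less_trans)
      then show "f \<in> (\<Union>g\<in>K. mball g e)" using \<open>f \<in> S\<close> unfolding K_def g_def by auto
    qed
    ultimately show "\<exists>K. finite K \<and> K \<subseteq> S \<and> S \<subseteq> (\<Union>x\<in>K. mball x e)" by blast
  qed
qed

theorem mainTheorem12:
  fixes r c \<delta> :: real
  assumes "0 < r" and "r < 1" and "0 < c" and "0 < \<delta>" and "\<delta> < 1"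
  shows "compactin (tadic_topology \<delta>) (Zr_le r c)"
proof -
  interpret Metric_space UNIV "tadic_dist \<delta>" using Metric_space_tadic_dist assms(4,5) .
  obtain N0 where "\<And>f n. f \<in> Zr_le r c \<Longrightarrow> n < N0 \<Longrightarrow> fls_nth f n = 0"
    using Zr_le_nth_eq_0_below[OF assms(1,2)] by blast
  then have "mtotally_bounded (Zr_le r c)"
    using tadic_mtotally_bounded finite_Zr_le_nth_image assms by blast
  then have "compactin mtopology (mtopology closure_of Zr_le r c)"
    using mtotally_bounded_eq_compact_closure_of mcomplete_tadic assms(4,5) by blast
  moreover have "mtopology closure_of Zr_le r c = Zr_le r c"
    using closedin_Zr_le assms(1,4,5) closure_of_closedin unfolding tadic_topology_def by blast
  ultimately show ?thesis unfolding tadic_topology_def by simp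
qed

end
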